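(* Let $q$ be a prime power, $n\ge1$, let $f(x)\in\mathbb{F}_{q^n}[x]$ be a permutation polynomial of $\mathbb{F}_{q^n}$, and let $m_1,\dots,m_n$ be positive integers. For $a_1,\dots,a_n,v_1,\dots,v_n\in\mathbb{F}_{q^n}$, the polynomial $$F(x)=a_1(\mathrm{Tr}(v_1f(x)))^{m_1}+\dots+a_n(\mathrm{Tr}(v_nf(x)))^{m_n}$$ is a permutation polynomial of $\mathbb{F}_{q^n}$ if and only if $\gcd(m_1m_2\cdots m_n,q-1)=1$ and both $\{a_1,\dots,a_n\}$ and $\{v_1,\dots,v_n\}$ are bases of $\mathbb{F}_{q^n}$ over $\mathbb{F}_q$.
   Context: $\mathrm{Tr}(x)=x+x^q+\dots+x^{q^{n-1}}$ is the trace from $\mathbb{F}_{q^n}$ to $\mathbb{F}_q$. A polynomial is a permutation polynomial of a finite field if the map it induces on that field is bijective. *)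

theory Defs
  imports "HOL-Number_Theory.Number_Theory" "HOL-Computational_Algebra.Polynomial"
begin

text \<open>The field of order q^n is modelled as a finite field type 'a with CARD('a) = q^n.
  Its subfield F_q is the set of fixed points of x \<mapsto> x^q.\<close>

definition subfield_Fq :: "nat \<Rightarrow> 'a::field set" where
  "subfield_Fq q = {x. x ^ q = x}"

definition trace_Fq :: "nat \<Rightarrow> nat \<Rightarrow> 'a::field \<Rightarrow> 'a" where
  "trace_Fq q n x = (\<Sum>i<n. x ^ (q ^ i))"

definition lin_indep_over :: "'a::field set \<Rightarrow> 'a set \<Rightarrow> bool" where
  "lin_indep_over K B \<longleftrightarrow>
     (\<forall>S c. finite S \<and> S \<subseteq> B \<and> (\<forall>s\<in>S. c s \<in> K) \<and> (\<Sum>s\<in>S. c s * s) = 0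
        \<longrightarrow> (\<forall>s\<in>S. c s = 0))"

definition spans_over :: "'a::field set \<Rightarrow> 'a set \<Rightarrow> bool" where
  "spans_over K B \<longleftrightarrow>
     (\<forall>y. \<exists>S c. finite S \<and> S \<subseteq> B \<and> (\<forall>s\<in>S. c s \<in> K) \<and> y = (\<Sum>s\<in>S. c s * s))"

definition is_basis_over :: "'a::field set \<Rightarrow> 'a set \<Rightarrow> bool" where
  "is_basis_over K B \<longleftrightarrow> lin_indep_over K B \<and> spans_over K B"

end

theory Submission
  imports Defs
begin

(*
  Write the map as L_a o P o T_v o f, where T_v y = (Tr (v_i y))_i lies in F_q^n, P raises the
  i-th coordinate to the power m_i, and L_a t = a_1 t_1 + ... + a_n t_n. All three spaces have
  q^n elements, so the composite is a permutation iff T_v and L_a are bijective and P is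
  injective. L_a is bijective iff the a_i form a basis over F_q; since the trace form
  (x, y) |-> Tr (x y) is nondegenerate, T_v is bijective iff L_v is; and x |-> x^m is injective
  on F_q iff gcd (m, q - 1) = 1, which holds for every m_i iff it holds for their product.
*)

text \<open>The library's \<open>finite_field_power_card_eq_same\<close> is stated for the sort
  \<open>finite_field\<close>, which a type variable of sort \<open>{field, finite}\<close> cannot be shown to have.\<close>

lemma power_card_eq_same:
  fixes x :: "'a::{field,finite}"
  shows "x ^ card (UNIV :: 'a set) = x"
proof (cases "x = 0")
  case True
  then show ?thesis
    using finite_UNIV_card_ge_0[where ?'a = 'a] by simp
next
  case False
  let ?U = "UNIV - {0 :: 'a}"
  have "bij_betw ((*) x) ?U ?U"
    using False by (intro bij_betwI[where g = "\<lambda>y. y / x"]) auto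
  then have "(\<Prod>y\<in>?U. x * y) = \<Prod>?U"
    by (rule prod.reindex_bij_betw)
  moreover have "(\<Prod>y\<in>?U. x * y) = x ^ (card (UNIV :: 'a set) - 1) * \<Prod>?U"
    by (simp add: prod.distrib card_Diff_singleton)
  moreover have "\<Prod>?U \<noteq> 0"
    by simp
  ultimately have "x ^ (card (UNIV :: 'a set) - 1) = 1"
    by simp
  then have "x ^ Suc (card (UNIV :: 'a set) - 1) = x"
    by simp
  moreover have "Suc (card (UNIV :: 'a set) - 1) = card (UNIV :: 'a set)"
    using finite_UNIV_card_ge_0[where ?'a = 'a] by simp
  ultimately show ?thesis
    by simp
qed

lemma card_power_eq_1_ge:
  fixes S :: "'a::field set"
  assumes "0 < d" "0 < e" "finite S" "card S = d * e" "\<forall>x\<in>S. x ^ (d * e) = 1"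
  shows "d \<le> card {x\<in>S. x ^ d = 1}"
proof -
  define h :: "'a poly" where "h = (\<Sum>i<e. monom 1 (d * i))"
  have poly_h: "poly h x = (\<Sum>i<e. (x ^ d) ^ i)" for x
    by (simp add: h_def poly_sum poly_monom power_mult)
  have "poly h 0 = 1"
    using assms(1,2) by (simp add: poly_h power_0_left)
  then have "h \<noteq> 0"
    by auto
  have "degree h \<le> d * (e - 1)"
    unfolding h_def using assms(2)
    by (intro degree_sum_le) (auto simp: degree_monom_eq intro: order.trans[OF degree_monom_le])
  have cover: "S \<subseteq> {x\<in>S. x ^ d = 1} \<union> {x. poly h x = 0}"
  proof
    fix x assume "x \<in> S"
    have "(x ^ d) ^ e - 1 = (x ^ d - 1) * poly h x"
      unfolding poly_h by (rule power_diff_1_eq)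
    with \<open>x \<in> S\<close> assms(5) show "x \<in> {x\<in>S. x ^ d = 1} \<union> {x. poly h x = 0}"
      by (auto simp: power_mult)
  qed
  have "card S \<le> card ({x\<in>S. x ^ d = 1} \<union> {x. poly h x = 0})"
    using assms(3) poly_roots_finite[OF \<open>h \<noteq> 0\<close>] by (intro card_mono[OF _ cover]) auto
  also have "\<dots> \<le> card {x\<in>S. x ^ d = 1} + d * (e - 1)"
    using card_Un_le[of "{x\<in>S. x ^ d = 1}" "{x. poly h x = 0}"]
      card_poly_roots_bound[OF \<open>h \<noteq> 0\<close>] \<open>degree h \<le> d * (e - 1)\<close>
    by linarith
  finally show ?thesis
    using assms(2,4) by (cases e) auto
qed

lemma coprime_prod_left_iff:
  fixes f :: "'b \<Rightarrow> 'a::semiring_gcd"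
  assumes "finite A"
  shows "coprime (\<Prod>i\<in>A. f i) a \<longleftrightarrow> (\<forall>i\<in>A. coprime (f i) a)"
  using assms by (induction A rule: finite_induct) auto

lemma diff_1_dvd_power_diff_1: "(a - 1) dvd (a ^ n - (1::nat))"
proof (cases "a = 0")
  case False
  have "int a ^ n - 1 = (int a - 1) * (\<Sum>i<n. int a ^ i)"
    by (rule power_diff_1_eq)
  then have "int (a - 1) dvd int (a ^ n - 1)"
    using False by (simp add: of_nat_diff)
  then show ?thesis
    by (simp only: of_nat_dvd_iff)
qed (simp add: power_0_left)

lemma inj_on_card_imp_bij_betw:
  assumes "finite B" "inj_on f A" "f ` A \<subseteq> B" "card A = card B"
  shows "bij_betw f A B"
  using assms by (metis bij_betw_def card_image card_subset_eq)

lemma bij_betw_comp3_iff: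
  assumes "finite B" "finite C" "card A = card B" "card B = card C"
    and "t ` A \<subseteq> B" "p ` B \<subseteq> B" "l ` B \<subseteq> C"
  shows "bij_betw (l \<circ> p \<circ> t) A C \<longleftrightarrow> bij_betw t A B \<and> inj_on p B \<and> bij_betw l B C"
proof
  assume "bij_betw t A B \<and> inj_on p B \<and> bij_betw l B C"
  moreover have "inj_on p B \<Longrightarrow> bij_betw p B B"
    using assms(1,6) by (simp add: inj_on_card_imp_bij_betw)
  ultimately show "bij_betw (l \<circ> p \<circ> t) A C"
    by (metis bij_betw_trans)
next
  assume bij: "bij_betw (l \<circ> p \<circ> t) A C"
  then have "inj_on t A"
    by (auto simp: bij_betw_def dest: inj_on_imageI2)
  then have "bij_betw t A B"
    using assms(1,3,5) by (simp add: inj_on_card_imp_bij_betw)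
  with bij have "inj_on (l \<circ> p) B"
    by (metis \<open>inj_on t A\<close> bij_betw_def bij_betw_imp_surj_on comp_assoc comp_inj_on_iff)
  then have "inj_on p B"
    by (rule inj_on_imageI2)
  then have "p ` B = B"
    using assms(1,6) by (simp add: card_image card_subset_eq)
  with \<open>inj_on (l \<circ> p) B\<close> have "inj_on l B"
    by (metis \<open>inj_on p B\<close> comp_inj_on_iff)
  then show "bij_betw t A B \<and> inj_on p B \<and> bij_betw l B C"
    using \<open>bij_betw t A B\<close> \<open>inj_on p B\<close> assms(2,4,7) by (simp add: inj_on_card_imp_bij_betw)
qed

lemma inj_on_image_inv_into:
  assumes "S \<subseteq> f ` A"
  shows "inj_on f (inv_into A f ` S)"
  using assms by (intro inj_onI) (auto simp: f_inv_into_f[OF subsetD[OF assms]])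

lemma sum_lincomb_restrict_coeffs:
  fixes w :: "'i \<Rightarrow> 'a::comm_semiring_1"
  assumes "finite I" "J \<subseteq> I" "inj_on w J"
  shows "(\<Sum>i\<in>I. w i * restrict (\<lambda>i. if i \<in> J then c (w i) else 0) I i) = (\<Sum>s\<in>w ` J. c s * s)"
proof -
  have "(\<Sum>i\<in>I. w i * restrict (\<lambda>i. if i \<in> J then c (w i) else 0) I i)
      = (\<Sum>i\<in>I. if i \<in> J then c (w i) * w i else 0)"
    by (intro sum.cong) (auto simp: mult.commute)
  also have "\<dots> = (\<Sum>i\<in>J. c (w i) * w i)"
    using assms(1,2) by (simp add: sum.If_cases Int_absorb1)
  also have "\<dots> = (\<Sum>s\<in>w ` J. c s * s)"
    using assms(3) by (simp add: sum.reindex)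
  finally show ?thesis .
qed

lemma surj_lincomb_if_spans_over:
  assumes "finite I" "0 \<in> K" "spans_over K (w ` I)"
  shows "(\<lambda>t. \<Sum>i\<in>I. w i * t i) ` PiE I (\<lambda>_. K) = UNIV"
proof -
  have "y \<in> (\<lambda>t. \<Sum>i\<in>I. w i * t i) ` PiE I (\<lambda>_. K)" for y
  proof -
    obtain S c where S: "S \<subseteq> w ` I" "\<forall>s\<in>S. c s \<in> K" "y = (\<Sum>s\<in>S. c s * s)"
      using assms(3) unfolding spans_over_def by blast
    define J where "J = inv_into I w ` S"
    have "J \<subseteq> I" "w ` J = S" "inj_on w J"
      using S(1) by (auto simp: J_def inv_into_into image_inv_into_cancel inj_on_image_inv_into)
    define t where "t = restrict (\<lambda>i. if i \<in> J then c (w i) else 0) I"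
    have "(\<Sum>i\<in>I. w i * t i) = y"
      using sum_lincomb_restrict_coeffs[OF assms(1) \<open>J \<subseteq> I\<close> \<open>inj_on w J\<close>, of c] S(3)
      unfolding t_def by (simp only: \<open>w ` J = S\<close>)
    moreover have "t \<in> PiE I (\<lambda>_. K)"
      using S(2) \<open>w ` J = S\<close> assms(2) by (auto simp: t_def)
    ultimately show ?thesis
      by (rule image_eqI[OF sym])
  qed
  then show ?thesis
    by auto
qed

lemma inj_on_if_inj_on_lincomb:
  fixes w :: "'i \<Rightarrow> 'a::semiring_1"
  assumes "finite I" "0 \<in> K" "1 \<in> K" "inj_on (\<lambda>t. \<Sum>i\<in>I. w i * t i) (PiE I (\<lambda>_. K))"
  shows "inj_on w I"
proof (rule inj_onI)
  define e :: "'i \<Rightarrow> 'i \<Rightarrow> 'a" where "e j = restrict (\<lambda>i. if i = j then 1 else 0) I" for j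
  have e_in_PiE: "e j \<in> PiE I (\<lambda>_. K)" for j
    using assms(2,3) by (auto simp: e_def)
  have lincomb_e: "(\<Sum>i\<in>I. w i * e j i) = w j" if "j \<in> I" for j
  proof -
    have "(\<Sum>i\<in>I. w i * e j i) = (\<Sum>i\<in>I. if i = j then w j else 0)"
      by (intro sum.cong) (auto simp: e_def)
    then show ?thesis
      using that assms(1) by (simp add: sum.delta')
  qed
  fix i j assume "i \<in> I" "j \<in> I" "w i = w j"
  then have "(\<Sum>k\<in>I. w k * e i k) = (\<Sum>k\<in>I. w k * e j k)"
    using lincomb_e by simp
  then have "e i = e j"
    by (rule inj_onD[OF assms(4) _ e_in_PiE e_in_PiE])
  then show "i = j"
    using \<open>i \<in> I\<close> by (auto simp: e_def dest: fun_cong[of _ _ i] split: if_splits)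
qed

lemma lin_indep_over_if_inj_on_lincomb:
  assumes "finite I" "0 \<in> K" "inj_on (\<lambda>t. \<Sum>i\<in>I. w i * t i) (PiE I (\<lambda>_. K))"
  shows "lin_indep_over K (w ` I)"
  unfolding lin_indep_over_def
proof (intro allI impI ballI)
  fix S c s
  assume S: "finite S \<and> S \<subseteq> w ` I \<and> (\<forall>s\<in>S. c s \<in> K) \<and> (\<Sum>s\<in>S. c s * s) = 0"
    and "s \<in> S"
  define J where "J = inv_into I w ` S"
  have "J \<subseteq> I" "w ` J = S" "inj_on w J"
    using S by (auto simp: J_def inv_into_into image_inv_into_cancel inj_on_image_inv_into)
  define t where "t = restrict (\<lambda>i. if i \<in> J then c (w i) else 0) I"
  have "(\<Sum>i\<in>I. w i * t i) = (\<Sum>i\<in>I. w i * restrict (\<lambda>_. 0) I i)"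
    using sum_lincomb_restrict_coeffs[OF assms(1) \<open>J \<subseteq> I\<close> \<open>inj_on w J\<close>] S
    by (simp add: t_def \<open>w ` J = S\<close>)
  moreover have "t \<in> PiE I (\<lambda>_. K)" "restrict (\<lambda>_. 0) I \<in> PiE I (\<lambda>_. K)"
    using S \<open>w ` J = S\<close> assms(2) by (auto simp: t_def)
  ultimately have "t = restrict (\<lambda>_. 0) I"
    by (rule inj_onD[OF assms(3)])
  moreover have "inv_into I w s \<in> J" "w (inv_into I w s) = s"
    using S \<open>s \<in> S\<close> by (auto simp: J_def f_inv_into_f)
  ultimately show "c s = 0"
    using \<open>J \<subseteq> I\<close> unfolding t_def by (auto dest!: fun_cong[of _ _ "inv_into I w s"])
qed

lemma spans_over_if_surj_lincomb:
  assumes "finite I" "inj_on w I" "(\<lambda>t. \<Sum>i\<in>I. w i * t i) ` PiE I (\<lambda>_. K) = UNIV"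
  shows "spans_over K (w ` I)"
  unfolding spans_over_def
proof
  fix y
  have "y \<in> (\<lambda>t. \<Sum>i\<in>I. w i * t i) ` PiE I (\<lambda>_. K)"
    using assms(3) by simp
  then obtain t where t: "t \<in> PiE I (\<lambda>_. K)" "y = (\<Sum>i\<in>I. w i * t i)"
    by blast
  have "y = (\<Sum>s\<in>w ` I. t (inv_into I w s) * s)"
    using t(2) assms(2) by (simp add: sum.reindex mult.commute)
  moreover have "\<forall>s\<in>w ` I. t (inv_into I w s) \<in> K"
    using t(1) by (auto simp: inv_into_into)
  ultimately show "\<exists>S c. finite S \<and> S \<subseteq> w ` I \<and> (\<forall>s\<in>S. c s \<in> K) \<and> y = (\<Sum>s\<in>S. c s * s)"
    using assms(1) by (intro exI[of _ "w ` I"] exI[of _ "\<lambda>s. t (inv_into I w s)"]) auto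
qed

lemma is_basis_over_iff_bij_lincomb:
  fixes w :: "'i \<Rightarrow> 'a::{field,finite}"
  assumes "finite I" "0 \<in> K" "1 \<in> K" "card K ^ card I = card (UNIV :: 'a set)"
  shows "is_basis_over K (w ` I) \<longleftrightarrow> bij_betw (\<lambda>t. \<Sum>i\<in>I. w i * t i) (PiE I (\<lambda>_. K)) UNIV"
    (is "_ \<longleftrightarrow> bij_betw ?L ?V UNIV")
proof
  have "finite ?V" "card ?V = card (UNIV :: 'a set)"
    using assms(1,4) by (simp_all add: finite_PiE card_PiE)
  moreover assume "is_basis_over K (w ` I)"
  then have "?L ` ?V = UNIV"
    using assms(1,2) by (simp add: is_basis_over_def surj_lincomb_if_spans_over)
  ultimately show "bij_betw ?L ?V UNIV"
    by (metis bij_betw_def eq_card_imp_inj_on)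
next
  assume "bij_betw ?L ?V UNIV"
  then have inj: "inj_on ?L ?V" and surj: "?L ` ?V = UNIV"
    by (simp_all add: bij_betw_def)
  have "inj_on w I"
    by (rule inj_on_if_inj_on_lincomb[OF assms(1-3) inj])
  then show "is_basis_over K (w ` I)"
    unfolding is_basis_over_def
    using lin_indep_over_if_inj_on_lincomb[OF assms(1,2) inj] spans_over_if_surj_lincomb[OF assms(1) _ surj]
    by blast
qed

lemma inj_on_restrict_powers_iff:
  fixes K :: "'a::semiring_1 set"
  assumes "z \<in> K"
  shows "inj_on (\<lambda>t. restrict (\<lambda>i. t i ^ m i) I) (PiE I (\<lambda>_. K))
    \<longleftrightarrow> (\<forall>i\<in>I. inj_on (\<lambda>x. x ^ m i) K)"
proof
  assume inj: "inj_on (\<lambda>t. restrict (\<lambda>i. t i ^ m i) I) (PiE I (\<lambda>_. K))"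
  show "\<forall>i\<in>I. inj_on (\<lambda>x. x ^ m i) K"
  proof (intro ballI inj_onI)
    fix i x y assume "i \<in> I" "x \<in> K" "y \<in> K" "x ^ m i = y ^ m i"
    define single where "single u = restrict (\<lambda>j. if j = i then u else z) I" for u
    have "restrict (\<lambda>j. single x j ^ m j) I = restrict (\<lambda>j. single y j ^ m j) I"
      using \<open>x ^ m i = y ^ m i\<close> by (auto simp: single_def)
    moreover have "single x \<in> PiE I (\<lambda>_. K)" "single y \<in> PiE I (\<lambda>_. K)"
      using \<open>x \<in> K\<close> \<open>y \<in> K\<close> assms by (auto simp: single_def)
    ultimately have "single x = single y"
      by (rule inj_onD[OF inj])
    then show "x = y"
      using \<open>i \<in> I\<close> by (auto simp: single_def dest: fun_cong[of _ _ i])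
  qed
next
  assume inj: "\<forall>i\<in>I. inj_on (\<lambda>x. x ^ m i) K"
  show "inj_on (\<lambda>t. restrict (\<lambda>i. t i ^ m i) I) (PiE I (\<lambda>_. K))"
  proof (intro inj_onI PiE_ext)
    fix t t' i
    assume "t \<in> PiE I (\<lambda>_. K)" "t' \<in> PiE I (\<lambda>_. K)" "i \<in> I"
      and "restrict (\<lambda>i. t i ^ m i) I = restrict (\<lambda>i. t' i ^ m i) I"
    then have "t i ^ m i = t' i ^ m i" "t i \<in> K" "t' i \<in> K"
      by (auto dest: fun_cong[of _ _ i])
    then show "t i = t' i"
      using inj \<open>i \<in> I\<close> by (auto dest: inj_onD)
  qed
qed

lemma prime_CHAR_finite_field: "prime CHAR('a::{field,finite})"
  by (rule prime_CHAR_semidom) (simp add: finite_imp_CHAR_pos)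

lemma inj_on_power_if_coprime:
  fixes K :: "'a::field set"
  assumes "\<forall>x\<in>K - {0}. x ^ k = 1" "coprime m k" "0 < m"
  shows "inj_on (\<lambda>x. x ^ m) K"
proof -
  obtain u w where uw: "m * u = k * w + 1"
    using bezout_nat[of m k] assms(2,3) by auto
  then have "0 < u"
    by (cases u) simp_all
  have "(x ^ m) ^ u = x" if "x \<in> K" for x
  proof (cases "x = 0")
    case False
    have "(x ^ m) ^ u = (x ^ k) ^ w * x"
      by (simp only: uw power_add power_one_right flip: power_mult)
    then show ?thesis
      using assms(1) that False by simp
  qed (use assms(3) \<open>0 < u\<close> in simp)
  then show ?thesis
    by (rule inj_on_inverseI)
qed

context
  fixes q n :: nat
  assumes primepow_q: "primepow q" and n_ge_1: "n \<ge> 1"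
    and card_field: "card (UNIV :: 'a::{field,finite} set) = q ^ n"
begin

lemma q_ge_2: "q \<ge> 2"
proof -
  obtain p k where "prime p" "k > 0" "q = p ^ k"
    using primepow_q unfolding primepow_def by blast
  moreover have "p \<ge> 2"
    using \<open>prime p\<close> by (rule prime_ge_2_nat)
  ultimately show ?thesis
    using self_le_power[of p k] by simp
qed

lemma q_eq_CHAR_power: "\<exists>k. q = CHAR('a) ^ k"
proof -
  obtain p k where p: "prime p" "q = p ^ k"
    using primepow_q unfolding primepow_def by blast
  have "CHAR('a) dvd p ^ (k * n)"
    using CHAR_dvd_CARD[where 'a = 'a] card_field p(2) by (simp add: power_mult)
  then have "CHAR('a) dvd p"
    using prime_CHAR_finite_field prime_dvd_power by blast
  then have "CHAR('a) = p"
    using prime_CHAR_finite_field p(1) primes_dvd_imp_eq by blast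
  then show ?thesis
    using p(2) by blast
qed

lemma power_q_power_add: "((x::'a) + y) ^ (q ^ i) = x ^ (q ^ i) + y ^ (q ^ i)"
proof -
  obtain k where "q ^ i = CHAR('a) ^ (k * i)"
    using q_eq_CHAR_power by (auto simp: power_mult)
  then show ?thesis
    using freshmans_dream'[OF prime_CHAR_finite_field] by blast
qed

lemma power_q_sum: "(\<Sum>i\<in>A. (g i :: 'a)) ^ q = (\<Sum>i\<in>A. g i ^ q)"
  using q_eq_CHAR_power freshmans_dream_sum'[OF prime_CHAR_finite_field] by blast

lemma power_q_power_n: "(x::'a) ^ (q ^ n) = x"
  using power_card_eq_same[of x] card_field by simp

lemma power_q_eq_mult: "(x::'a) ^ q = x ^ (q - 1) * x"
  using q_ge_2 power_Suc2[of x "q - 1"] by simp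

lemma zero_in_subfield_Fq: "(0::'a) \<in> subfield_Fq q"
  using q_ge_2 by (simp add: subfield_Fq_def)

lemma one_in_subfield_Fq: "(1::'a) \<in> subfield_Fq q"
  by (simp add: subfield_Fq_def)

lemma power_in_subfield_Fq: "(x::'a) \<in> subfield_Fq q \<Longrightarrow> x ^ m \<in> subfield_Fq q"
  by (simp add: subfield_Fq_def flip: power_mult) (metis mult.commute power_mult)

lemma subfield_Fq_power_q_power: "(x::'a) \<in> subfield_Fq q \<Longrightarrow> x ^ (q ^ i) = x"
  by (induction i) (simp_all add: subfield_Fq_def power_mult)

lemma subfield_Fq_power_q_minus_1:
  assumes "(x::'a) \<in> subfield_Fq q" "x \<noteq> 0"
  shows "x ^ (q - 1) = 1"
proof -
  have "x ^ (q - 1) * x = x"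
    using assms(1) power_q_eq_mult[of x] by (simp add: subfield_Fq_def)
  then show ?thesis
    using assms(2) by simp
qed

lemma card_subfield_Fq: "card (subfield_Fq q :: 'a set) = q"
proof (rule antisym)
  define P :: "'a poly" where "P = monom 1 q - monom 1 1"
  have "coeff P q = 1"
    using q_ge_2 by (simp add: P_def)
  then have "P \<noteq> 0"
    by auto
  moreover have "degree P \<le> q"
    unfolding P_def using q_ge_2 by (intro degree_diff_le order.trans[OF degree_monom_le]) auto
  moreover have "subfield_Fq q = {x. poly P x = 0}"
    by (auto simp: P_def poly_monom subfield_Fq_def)
  ultimately show "card (subfield_Fq q :: 'a set) \<le> q"
    using card_poly_roots_bound[of P] by simp
next
  let ?S = "UNIV - {0 :: 'a}"
  obtain e where e: "q ^ n - 1 = (q - 1) * e"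
    using diff_1_dvd_power_diff_1 by blast
  have "q - 1 \<le> q ^ n - 1"
    using n_ge_1 q_ge_2 self_le_power[of q n] by simp
  then have "0 < e"
    using e q_ge_2 by (cases e) auto
  have "card ?S = (q - 1) * e"
    using card_field e by (simp add: card_Diff_singleton)
  moreover have "\<forall>x\<in>?S. x ^ ((q - 1) * e) = 1"
  proof
    fix x :: 'a assume "x \<in> ?S"
    have "x ^ (q ^ n - 1) * x = x"
      using power_q_power_n[of x] power_Suc2[of x "q ^ n - 1"] q_ge_2 by simp
    then show "x ^ ((q - 1) * e) = 1"
      using \<open>x \<in> ?S\<close> e by simp
  qed
  ultimately have "q - 1 \<le> card {x\<in>?S. x ^ (q - 1) = 1}"
    using q_ge_2 \<open>0 < e\<close> by (intro card_power_eq_1_ge) auto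
  also have "\<dots> \<le> card (subfield_Fq q - {0 :: 'a})"
    by (intro card_mono) (auto simp: subfield_Fq_def power_q_eq_mult)
  also have "\<dots> = card (subfield_Fq q :: 'a set) - 1"
    using zero_in_subfield_Fq by (simp add: card_Diff_singleton)
  finally show "q \<le> card (subfield_Fq q :: 'a set)"
    using q_ge_2 by linarith
qed

lemma inj_on_power_subfield_Fq_iff:
  assumes "m > 0"
  shows "inj_on (\<lambda>x::'a. x ^ m) (subfield_Fq q) \<longleftrightarrow> coprime m (q - 1)"
proof
  assume "coprime m (q - 1)"
  then show "inj_on (\<lambda>x::'a. x ^ m) (subfield_Fq q)"
    using subfield_Fq_power_q_minus_1 assms by (intro inj_on_power_if_coprime) auto
next
  assume inj: "inj_on (\<lambda>x::'a. x ^ m) (subfield_Fq q)"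
  define d where "d = gcd m (q - 1)"
  have "d dvd q - 1"
    by (simp add: d_def)
  then obtain e where e: "q - 1 = d * e"
    by (rule dvdE)
  let ?S = "subfield_Fq q - {0 :: 'a}"
  have "0 < d"
    unfolding d_def using assms gcd_pos_nat by blast
  moreover have "0 < e"
    using e q_ge_2 by (cases e) auto
  moreover have "card ?S = d * e"
    using card_subfield_Fq zero_in_subfield_Fq e by (simp add: card_Diff_singleton)
  moreover have "\<forall>x\<in>?S. x ^ (d * e) = 1"
    using subfield_Fq_power_q_minus_1 e by auto
  ultimately have "d \<le> card {x\<in>?S. x ^ d = 1}"
    by (intro card_power_eq_1_ge) auto
  moreover have "{x\<in>?S. x ^ d = 1} \<subseteq> {1}"
  proof
    fix x assume x: "x \<in> {x\<in>?S. x ^ d = 1}"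
    have "d dvd m"
      by (simp add: d_def)
    then obtain k where "m = d * k"
      by (rule dvdE)
    then have "x ^ m = 1 ^ m"
      using x by (simp add: power_mult)
    then show "x \<in> {1}"
      using inj_onD[OF inj] x one_in_subfield_Fq by simp
  qed
  then have "card {x\<in>?S. x ^ d = 1} \<le> 1"
    using card_mono[of "{1}"] by simp
  ultimately have "d = 1"
    using \<open>0 < d\<close> by linarith
  then show "coprime m (q - 1)"
    unfolding d_def coprime_iff_gcd_eq_1 .
qed

lemma trace_Fq_add: "trace_Fq q n ((x::'a) + y) = trace_Fq q n x + trace_Fq q n y"
  by (simp add: trace_Fq_def power_q_power_add sum.distrib)

lemma trace_Fq_zero: "trace_Fq q n (0::'a) = 0"
  using q_ge_2 by (simp add: trace_Fq_def zero_power)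

lemma trace_Fq_sum: "trace_Fq q n (\<Sum>i\<in>A. g i :: 'a) = (\<Sum>i\<in>A. trace_Fq q n (g i))"
  by (induction A rule: infinite_finite_induct) (simp_all add: trace_Fq_add trace_Fq_zero)

lemma trace_Fq_mult_subfield:
  "(c::'a) \<in> subfield_Fq q \<Longrightarrow> trace_Fq q n (c * x) = c * trace_Fq q n x"
  by (simp add: trace_Fq_def power_mult_distrib subfield_Fq_power_q_power sum_distrib_left)

lemma trace_Fq_in_subfield: "trace_Fq q n (x::'a) \<in> subfield_Fq q"
proof -
  have "trace_Fq q n x ^ q = (\<Sum>i<n. (x ^ (q ^ i)) ^ q)"
    by (simp add: trace_Fq_def power_q_sum)
  also have "\<dots> = (\<Sum>i<n. x ^ (q ^ Suc i))"
    by (simp only: power_Suc2 power_mult)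
  also have "\<dots> = trace_Fq q n x"
  proof -
    have "(\<Sum>i<Suc n. x ^ (q ^ i)) = x + (\<Sum>i<n. x ^ (q ^ Suc i))"
      by (simp only: sum.lessThan_Suc_shift power_0 power_one_right)
    moreover have "(\<Sum>i<Suc n. x ^ (q ^ i)) = trace_Fq q n x + x"
      by (simp add: trace_Fq_def power_q_power_n)
    ultimately show ?thesis
      by (simp add: add.commute)
  qed
  finally show ?thesis
    by (simp add: subfield_Fq_def)
qed

lemma trace_Fq_nonzero: "\<exists>u::'a. trace_Fq q n u \<noteq> 0"
proof -
  define T :: "'a poly" where "T = (\<Sum>i<n. monom 1 (q ^ i))"
  have coeff_T: "coeff T j = (\<Sum>i<n. if q ^ i = j then 1 else 0)" for j
    by (simp add: T_def coeff_sum)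
  have "coeff T (q ^ (n - 1)) = 1"
    unfolding coeff_T using n_ge_1 q_ge_2 by (simp add: power_inject_exp sum.delta)
  then have "T \<noteq> 0"
    by auto
  have "degree T \<le> q ^ (n - 1)"
    unfolding T_def using q_ge_2
    by (intro degree_sum_le order.trans[OF degree_monom_le]) (auto intro: power_increasing)
  moreover have "q ^ (n - 1) < q ^ n"
    using q_ge_2 n_ge_1 by (intro power_strict_increasing) auto
  ultimately have "card {x. poly T x = 0} < card (UNIV :: 'a set)"
    using card_poly_roots_bound[OF \<open>T \<noteq> 0\<close>] card_field by linarith
  then obtain u where "poly T u \<noteq> 0"
    by (metis (mono_tags, lifting) UNIV_eq_I less_irrefl mem_Collect_eq)
  then show ?thesis
    by (auto simp: T_def poly_sum poly_monom trace_Fq_def)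
qed

lemma card_coords_subfield_Fq:
  assumes "finite I" "card I = n"
  shows "card (PiE I (\<lambda>_. subfield_Fq q :: 'a set)) = card (UNIV :: 'a set)"
  using assms by (simp add: card_PiE card_subfield_Fq card_field)

lemma trace_Fq_lincomb:
  assumes "t \<in> PiE I (\<lambda>_. subfield_Fq q)"
  shows "trace_Fq q n ((\<Sum>i\<in>I. v i * t i) * (y::'a)) = (\<Sum>i\<in>I. t i * trace_Fq q n (v i * y))"
proof -
  have "(\<Sum>i\<in>I. v i * t i) * y = (\<Sum>i\<in>I. t i * (v i * y))"
    unfolding sum_distrib_right by (intro sum.cong) (simp_all add: mult_ac)
  then have "trace_Fq q n ((\<Sum>i\<in>I. v i * t i) * y) = (\<Sum>i\<in>I. trace_Fq q n (t i * (v i * y)))"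
    by (simp add: trace_Fq_sum)
  also have "\<dots> = (\<Sum>i\<in>I. t i * trace_Fq q n (v i * y))"
    by (intro sum.cong refl trace_Fq_mult_subfield PiE_mem[OF assms])
  finally show ?thesis .
qed

lemma is_basis_over_subfield_Fq_iff:
  assumes "finite I" "card I = n"
  shows "is_basis_over (subfield_Fq q) (w ` I)
    \<longleftrightarrow> bij_betw (\<lambda>t. \<Sum>i\<in>I. w i * t i) (PiE I (\<lambda>_. subfield_Fq q :: 'a set)) UNIV"
  using assms card_subfield_Fq card_field zero_in_subfield_Fq one_in_subfield_Fq
  by (intro is_basis_over_iff_bij_lincomb) auto

lemma inj_on_powers_subfield_Fq_iff:
  assumes "finite I" "\<forall>i\<in>I. m i > 0"
  shows "inj_on (\<lambda>t. restrict (\<lambda>i. t i ^ m i) I) (PiE I (\<lambda>_. subfield_Fq q :: 'a set))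
    \<longleftrightarrow> coprime (\<Prod>i\<in>I. m i) (q - 1)"
  using assms inj_on_power_subfield_Fq_iff
  by (simp add: inj_on_restrict_powers_iff[OF zero_in_subfield_Fq] coprime_prod_left_iff)

lemma inj_trace_coords_if_surj_lincomb:
  assumes "(\<lambda>t. \<Sum>i\<in>I. v i * t i) ` PiE I (\<lambda>_. subfield_Fq q) = (UNIV :: 'a set)"
  shows "inj (\<lambda>y::'a. restrict (\<lambda>i. trace_Fq q n (v i * y)) I)"
proof (rule injI, rule ccontr)
  fix y y' :: 'a
  assume eq: "restrict (\<lambda>i. trace_Fq q n (v i * y)) I = restrict (\<lambda>i. trace_Fq q n (v i * y')) I"
    and "y \<noteq> y'"
  have trace_diff: "trace_Fq q n (v i * (y - y')) = 0" if "i \<in> I" for i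
    using fun_cong[OF eq, of i] that trace_Fq_add[of "v i * (y - y')" "v i * y'"]
    by (simp add: algebra_simps)
  have "trace_Fq q n u = 0" for u :: 'a
  proof -
    have "u / (y - y') \<in> (\<lambda>t. \<Sum>i\<in>I. v i * t i) ` PiE I (\<lambda>_. subfield_Fq q)"
      using assms by simp
    then obtain t where "t \<in> PiE I (\<lambda>_. subfield_Fq q)" "u = (\<Sum>i\<in>I. v i * t i) * (y - y')"
      using \<open>y \<noteq> y'\<close> by (auto simp: field_simps)
    then show ?thesis
      using trace_Fq_lincomb[of t I v "y - y'"] trace_diff by simp
  qed
  then show False
    using trace_Fq_nonzero by blast
qed

lemma inj_on_lincomb_if_surj_trace_coords:
  assumes "finite I"
    and "range (\<lambda>y::'a. restrict (\<lambda>i. trace_Fq q n (v i * y)) I) = PiE I (\<lambda>_. subfield_Fq q)"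
  shows "inj_on (\<lambda>t. \<Sum>i\<in>I. v i * t i) (PiE I (\<lambda>_. subfield_Fq q))"
proof (intro inj_onI PiE_ext)
  fix t t' j
  assume t: "t \<in> PiE I (\<lambda>_. subfield_Fq q)" "t' \<in> PiE I (\<lambda>_. subfield_Fq q)"
    and "(\<Sum>i\<in>I. v i * t i) = (\<Sum>i\<in>I. v i * t' i)" and "j \<in> I"
  have "restrict (\<lambda>i. if i = j then 1 else 0) I \<in> PiE I (\<lambda>_. subfield_Fq q :: 'a set)"
    using zero_in_subfield_Fq one_in_subfield_Fq by auto
  then obtain y where y: "restrict (\<lambda>i. if i = j then 1 else 0) I = restrict (\<lambda>i. trace_Fq q n (v i * y)) I"
    unfolding assms(2)[symmetric] by (rule rangeE)
  have coordinate: "trace_Fq q n ((\<Sum>i\<in>I. v i * s i) * y) = s j" if "s \<in> PiE I (\<lambda>_. subfield_Fq q)" for s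
  proof -
    have "trace_Fq q n ((\<Sum>i\<in>I. v i * s i) * y) = (\<Sum>i\<in>I. s i * trace_Fq q n (v i * y))"
      by (rule trace_Fq_lincomb[OF that])
    also have "\<dots> = (\<Sum>i\<in>I. s i * (if i = j then 1 else 0))"
    proof (rule sum.cong[OF refl])
      fix i assume "i \<in> I"
      then show "s i * trace_Fq q n (v i * y) = s i * (if i = j then 1 else 0)"
        using fun_cong[OF y, of i] by simp
    qed
    finally show ?thesis
      using \<open>j \<in> I\<close> assms(1) by (simp add: if_distrib sum.delta' cong: if_cong)
  qed
  show "t j = t' j"
    using coordinate[OF t(1)] coordinate[OF t(2)] \<open>(\<Sum>i\<in>I. v i * t i) = (\<Sum>i\<in>I. v i * t' i)\<close>
    by simp
qed

lemma bij_trace_coords_iff_bij_lincomb: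
  assumes "finite I" "card I = n"
  shows "bij_betw (\<lambda>y::'a. restrict (\<lambda>i. trace_Fq q n (v i * y)) I) UNIV (PiE I (\<lambda>_. subfield_Fq q))
    \<longleftrightarrow> bij_betw (\<lambda>t. \<Sum>i\<in>I. v i * t i) (PiE I (\<lambda>_. subfield_Fq q)) UNIV"
    (is "bij_betw ?T UNIV ?V \<longleftrightarrow> bij_betw ?L ?V UNIV")
proof -
  have V: "finite ?V" "card ?V = card (UNIV :: 'a set)" "range ?T \<subseteq> ?V"
    using card_coords_subfield_Fq[OF assms] assms(1) trace_Fq_in_subfield by (auto simp: finite_PiE)
  show ?thesis
  proof
    assume "bij_betw ?L ?V UNIV"
    then have "inj ?T"
      by (intro inj_trace_coords_if_surj_lincomb) (simp add: bij_betw_def)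
    with V show "bij_betw ?T UNIV ?V"
      by (intro inj_on_card_imp_bij_betw) auto
  next
    assume "bij_betw ?T UNIV ?V"
    then have "inj_on ?L ?V"
      by (intro inj_on_lincomb_if_surj_trace_coords[OF assms(1)]) (simp add: bij_betw_def)
    with V show "bij_betw ?L ?V UNIV"
      by (intro inj_on_card_imp_bij_betw) auto
  qed
qed

end

theorem mainTheorem8:
  fixes q n :: nat
    and f :: "'a::{field,finite} poly"
    and m :: "nat \<Rightarrow> nat"
    and a v :: "nat \<Rightarrow> 'a"
  assumes "primepow q"
    and "n \<ge> 1"
    and "card (UNIV :: 'a set) = q ^ n"
    and "bij (poly f)"
    and "\<forall>i\<in>{1..n}. m i > 0"
  shows "bij (\<lambda>x. \<Sum>i=1..n. a i * (trace_Fq q n (v i * poly f x)) ^ m i) \<longleftrightarrow>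
         (gcd (\<Prod>i=1..n. m i) (q - 1) = 1
          \<and> is_basis_over (subfield_Fq q) (a ` {1..n})
          \<and> is_basis_over (subfield_Fq q) (v ` {1..n}))"
proof -
  let ?K = "subfield_Fq q :: 'a set" and ?I = "{1..n}"
  let ?V = "PiE ?I (\<lambda>_. ?K)"
  let ?T = "\<lambda>y. restrict (\<lambda>i. trace_Fq q n (v i * y)) ?I"
  let ?P = "\<lambda>t. restrict (\<lambda>i. t i ^ m i) ?I"
  let ?L = "\<lambda>t. \<Sum>i\<in>?I. a i * t i"
  have F: "(\<lambda>x. \<Sum>i=1..n. a i * (trace_Fq q n (v i * poly f x)) ^ m i) = (?L \<circ> ?P \<circ> ?T) \<circ> poly f"
    by (auto intro!: sum.cong)
  have "bij (\<lambda>x. \<Sum>i=1..n. a i * (trace_Fq q n (v i * poly f x)) ^ m i)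
      \<longleftrightarrow> bij_betw (?L \<circ> ?P \<circ> ?T) UNIV UNIV"
    unfolding F by (rule bij_betw_comp_iff[OF assms(4), symmetric])
  also have "\<dots> \<longleftrightarrow> bij_betw ?T UNIV ?V \<and> inj_on ?P ?V \<and> bij_betw ?L ?V UNIV"
    using card_coords_subfield_Fq[OF assms(1-3), of ?I] trace_Fq_in_subfield[OF assms(1-3)]
    by (intro bij_betw_comp3_iff)
      (auto simp: finite_PiE PiE_iff intro!: power_in_subfield_Fq[OF assms(1-3)])
  also have "\<dots> \<longleftrightarrow> is_basis_over ?K (v ` ?I) \<and> coprime (\<Prod>i=1..n. m i) (q - 1)
      \<and> is_basis_over ?K (a ` ?I)"
    using bij_trace_coords_iff_bij_lincomb[OF assms(1-3), of ?I v]
      is_basis_over_subfield_Fq_iff[OF assms(1-3), of ?I] inj_on_powers_subfield_Fq_iff[OF assms(1-3) _ assms(5)]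
    by simp
  finally show ?thesis
    by (simp only: coprime_iff_gcd_eq_1 conj_ac)
qed

end
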